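(* Let $S$ be a finite poset such that $\Gamma(S)$ contains a cycle but $\Gamma(S')$ is acyclic for every proper subset $S'\subset S$ with the induced order. Then $S$ is isomorphic either to $V$ or to $W^{2k}$ for some $k\ge2$.
   Context: $\Gamma(S)$ is the Hasse graph of $S$ (vertices $S$, edge between $s,s'$ when one covers the other); a cycle is a sequence of $m\ge3$ distinct vertices with consecutive ones (and the last and first) adjacent. $V=\{h^-,h_1,h_2,h^+\}$ with $h^-<h_1<h^+$, $h^-<h_2<h^+$, $h_1,h_2$ incomparable. $W^{2k}=\{s_1^-,\dots,s_k^-,s_1^+,\dots,s_k^+\}$ with the order whose only strict relations are $s_i^-<s_i^+$ ($1\le i\le k$), $s_i^-<s_{i+1}^+$ ($1\le i\le k-1$) and $s_k^-<s_1^+$ (a crown). *)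

theory Defs
  imports Main
begin

text \<open>A finite poset is a carrier set S with a (non-strict) order relation le.
  Subsets carry the induced order (same relation, restricted carrier).\<close>

definition poset_on :: "'a set \<Rightarrow> ('a \<Rightarrow> 'a \<Rightarrow> bool) \<Rightarrow> bool" where
  "poset_on S le \<longleftrightarrow>
     (\<forall>x\<in>S. le x x) \<and>
     (\<forall>x\<in>S. \<forall>y\<in>S. le x y \<and> le y x \<longrightarrow> x = y) \<and>
     (\<forall>x\<in>S. \<forall>y\<in>S. \<forall>z\<in>S. le x y \<and> le y z \<longrightarrow> le x z)"

definition covers :: "'a set \<Rightarrow> ('a \<Rightarrow> 'a \<Rightarrow> bool) \<Rightarrow> 'a \<Rightarrow> 'a \<Rightarrow> bool" where
  "covers S le x y \<longleftrightarrow> x \<in> S \<and> y \<in> S \<and> le x y \<and> x \<noteq> y \<and>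
     \<not> (\<exists>z\<in>S. le x z \<and> le z y \<and> z \<noteq> x \<and> z \<noteq> y)"

definition hasse_adj :: "'a set \<Rightarrow> ('a \<Rightarrow> 'a \<Rightarrow> bool) \<Rightarrow> 'a \<Rightarrow> 'a \<Rightarrow> bool" where
  "hasse_adj S le x y \<longleftrightarrow> covers S le x y \<or> covers S le y x"

definition hasse_has_cycle :: "'a set \<Rightarrow> ('a \<Rightarrow> 'a \<Rightarrow> bool) \<Rightarrow> bool" where
  "hasse_has_cycle S le \<longleftrightarrow>
     (\<exists>xs. length xs \<ge> 3 \<and> distinct xs \<and> set xs \<subseteq> S \<and>
        (\<forall>i < length xs. hasse_adj S le (xs ! i) (xs ! ((i + 1) mod length xs))))"

definition order_iso :: "'a set \<Rightarrow> ('a \<Rightarrow> 'a \<Rightarrow> bool) \<Rightarrow> 'b set \<Rightarrow> ('b \<Rightarrow> 'b \<Rightarrow> bool) \<Rightarrow> bool" where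
  "order_iso S le T le' \<longleftrightarrow>
     (\<exists>f. bij_betw f S T \<and> (\<forall>x\<in>S. \<forall>y\<in>S. le x y \<longleftrightarrow> le' (f x) (f y)))"

text \<open>The poset V: h^- = 0, h_1 = 1, h_2 = 2, h^+ = 3.\<close>
definition V_set :: "nat set" where "V_set = {0, 1, 2, 3}"
definition V_le :: "nat \<Rightarrow> nat \<Rightarrow> bool" where
  "V_le x y \<longleftrightarrow> x = y \<or> x = 0 \<or> y = 3"

text \<open>The crown W^{2k}: s_{i+1}^- is (False, i), s_{i+1}^+ is (True, i), for i < k.
  Strict relations: s_i^- < s_i^+, s_i^- < s_{i+1}^+, s_k^- < s_1^+.\<close>
definition W_set :: "nat \<Rightarrow> (bool \<times> nat) set" where
  "W_set k = {(b, i). i < k}"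
definition W_le :: "nat \<Rightarrow> bool \<times> nat \<Rightarrow> bool \<times> nat \<Rightarrow> bool" where
  "W_le k p q \<longleftrightarrow> p = q \<or>
     (\<not> fst p \<and> fst q \<and> (snd q = snd p \<or> snd q = (snd p + 1) mod k))"

end

theory Submission
  imports Defs
begin

text \<open>Fix a Hasse cycle of S. Minimality forces it to pass through every element of S and to
  have no chords; moreover, deleting a vertex x leaves its two cycle neighbours non-adjacent
  in the Hasse graph of S - {x}, since otherwise the rest of the cycle would survive there.
  If S contains a diamond b < x, z < a with x and z incomparable, then b, x, a, z is already
  a Hasse cycle, so S = {b, x, z, a} is V. Otherwise S has no chain y < x < w: refining it to
  covers y' < x < w', the points y' and w' are the cycle neighbours of x, so some z in
  S - {x} lies strictly between them, and z is incomparable to x, giving a diamond.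
  Then every strict relation is a cover, hence a cycle edge, the cycle alternates between
  minimal and maximal elements, and S is the crown W^{2k}.\<close>

definition hasse_cycle :: "'a set \<Rightarrow> ('a \<Rightarrow> 'a \<Rightarrow> bool) \<Rightarrow> 'a list \<Rightarrow> bool" where
  "hasse_cycle S le xs \<longleftrightarrow> length xs \<ge> 3 \<and> distinct xs \<and> set xs \<subseteq> S \<and>
     (\<forall>i < length xs. hasse_adj S le (xs ! i) (xs ! ((i + 1) mod length xs)))"

lemma hasse_has_cycle_iff: "hasse_has_cycle S le \<longleftrightarrow> (\<exists>xs. hasse_cycle S le xs)"
  unfolding hasse_has_cycle_def hasse_cycle_def ..

lemma hasse_cycle_adj:
  "hasse_cycle S le xs \<Longrightarrow> i < length xs \<Longrightarrow> hasse_adj S le (xs ! i) (xs ! ((i + 1) mod length xs))"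
  unfolding hasse_cycle_def by blast

lemma
  assumes "poset_on S le"
  shows poset_on_refl: "x \<in> S \<Longrightarrow> le x x"
    and poset_on_antisym: "x \<in> S \<Longrightarrow> y \<in> S \<Longrightarrow> le x y \<Longrightarrow> le y x \<Longrightarrow> x = y"
    and poset_on_trans: "x \<in> S \<Longrightarrow> y \<in> S \<Longrightarrow> z \<in> S \<Longrightarrow> le x y \<Longrightarrow> le y z \<Longrightarrow> le x z"
  using assms unfolding poset_on_def by blast+

lemma poset_on_conversep: "poset_on S le \<Longrightarrow> poset_on S le\<inverse>\<inverse>"
  unfolding poset_on_def conversep_iff by blast

lemma covers_conversep: "covers S le\<inverse>\<inverse> x y \<longleftrightarrow> covers S le y x"
  unfolding covers_def conversep_iff by blast

lemma covers_subset:
  "covers S le x y \<Longrightarrow> T \<subseteq> S \<Longrightarrow> x \<in> T \<Longrightarrow> y \<in> T \<Longrightarrow> covers T le x y"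
  unfolding covers_def by blast

lemma hasse_adj_subset:
  "hasse_adj S le x y \<Longrightarrow> T \<subseteq> S \<Longrightarrow> x \<in> T \<Longrightarrow> y \<in> T \<Longrightarrow> hasse_adj T le x y"
  unfolding hasse_adj_def using covers_subset by metis

lemma hasse_adj_commute: "hasse_adj S le x y \<longleftrightarrow> hasse_adj S le y x"
  unfolding hasse_adj_def by blast

lemma hasse_adj_irrefl: "\<not> hasse_adj S le x x"
  unfolding hasse_adj_def covers_def by blast

lemma covers_covers_not_hasse_adj:
  assumes "poset_on S le" "covers S le x y" "covers S le y z"
  shows "\<not> hasse_adj S le x z"
  using assms unfolding hasse_adj_def covers_def poset_on_def by metis

lemma hasse_cycle_subset:
  assumes cyc: "hasse_cycle S le xs" and sub: "set xs \<subseteq> T" "T \<subseteq> S"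
  shows "hasse_cycle T le xs"
proof -
  have "hasse_adj T le (xs ! i) (xs ! ((i + 1) mod length xs))" if i: "i < length xs" for i
  proof (rule hasse_adj_subset[OF hasse_cycle_adj[OF cyc i] sub(2)])
    have "(i + 1) mod length xs < length xs" using i by (intro mod_less_divisor) linarith
    then show "xs ! i \<in> T" "xs ! ((i + 1) mod length xs) \<in> T"
      using i sub(1) by (meson nth_mem subsetD)+
  qed
  then show ?thesis using cyc sub(1) unfolding hasse_cycle_def by blast
qed

lemma hasse_cycle_segment:
  assumes cyc: "hasse_cycle S le xs" and n: "3 \<le> n" "i + n \<le> length xs"
    and T: "T \<subseteq> S" "set (take n (drop i xs)) \<subseteq> T"
    and closing: "hasse_adj T le (xs ! (i + n - 1)) (xs ! i)"
  shows "hasse_cycle T le (take n (drop i xs))"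
proof -
  let ?ys = "take n (drop i xs)"
  have len: "length ?ys = n" using n by simp
  have nth: "?ys ! k = xs ! (i + k)" if "k < n" for k using that n by simp
  have "hasse_adj T le (?ys ! k) (?ys ! ((k + 1) mod n))" if k: "k < n" for k
  proof (cases "k + 1 < n")
    case True
    have "hasse_adj S le (xs ! (i + k)) (xs ! ((i + k + 1) mod length xs))"
      using hasse_cycle_adj[OF cyc, of "i + k"] k n by simp
    moreover have "(i + k + 1) mod length xs = i + (k + 1)" using True n by simp
    ultimately have "hasse_adj S le (?ys ! k) (?ys ! (k + 1))"
      using True nth by simp
    moreover have "?ys ! k \<in> T" "?ys ! (k + 1) \<in> T"
      using T(2) True len by (metis k nth_mem subsetD)+
    ultimately show ?thesis using hasse_adj_subset T(1) True by simp
  next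
    case False
    then have "k = n - 1" using k by simp
    then show ?thesis using closing nth n by simp
  qed
  moreover have "distinct ?ys" using cyc unfolding hasse_cycle_def by simp
  ultimately show ?thesis using len n T unfolding hasse_cycle_def by auto
qed

lemma hasse_cycle_length_ge_4:
  assumes "poset_on S le" "hasse_cycle S le xs"
  shows "4 \<le> length xs"
proof (rule ccontr)
  assume "\<not> 4 \<le> length xs"
  with assms(2) have "length xs = 3" unfolding hasse_cycle_def by simp
  then obtain a b c where xs: "xs = [a, b, c]"
    by (auto simp: numeral_3_eq_3 length_Suc_conv)
  have "\<forall>i<3. hasse_adj S le ([a, b, c] ! i) ([a, b, c] ! ((i + 1) mod 3))"
    using assms(2) unfolding hasse_cycle_def xs by simp
  then have "hasse_adj S le a b" "hasse_adj S le b c" "hasse_adj S le c a"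
    by (auto dest: spec[of _ 0] spec[of _ 1] spec[of _ 2])
  \<comment> \<open>every orientation of a triangle contains a directed path of length two\<close>
  then show False
    using covers_covers_not_hasse_adj[OF assms(1)] unfolding hasse_adj_def by blast
qed

lemma hasse_cycle_rotate:
  assumes "hasse_cycle S le xs"
  shows "hasse_cycle S le (rotate n xs)"
proof -
  let ?m = "length xs"
  have "hasse_adj S le (rotate n xs ! i) (rotate n xs ! ((i + 1) mod ?m))" if i: "i < ?m" for i
  proof -
    have m: "0 < ?m" using i by linarith
    have "rotate n xs ! ((i + 1) mod ?m) = xs ! ((n + (i + 1) mod ?m) mod ?m)"
      using m by (intro nth_rotate) simp
    also have "(n + (i + 1) mod ?m) mod ?m = ((n + i) mod ?m + 1) mod ?m"
      by (metis add.assoc mod_add_left_eq mod_add_right_eq)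
    finally have "rotate n xs ! ((i + 1) mod ?m) = xs ! (((n + i) mod ?m + 1) mod ?m)" .
    moreover have "rotate n xs ! i = xs ! ((n + i) mod ?m)" using i by (rule nth_rotate)
    moreover have "(n + i) mod ?m < ?m" using m by simp
    ultimately show ?thesis using assms unfolding hasse_cycle_def by simp
  qed
  then show ?thesis using assms unfolding hasse_cycle_def by simp
qed

lemma hasse_cycle_rotate_to_head:
  assumes "hasse_cycle S le xs" "x \<in> set xs"
  obtains ys where "hasse_cycle S le (x # ys)"
proof -
  obtain i where i: "i < length xs" "xs ! i = x" using assms(2) by (auto simp: in_set_conv_nth)
  then have "hd (rotate i xs) = x" by (subst hd_rotate_conv_nth) auto
  moreover have "rotate i xs \<noteq> []" using i by auto
  ultimately have "rotate i xs = x # tl (rotate i xs)" by (metis list.collapse)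
  then show ?thesis using that hasse_cycle_rotate[OF assms(1)] by metis
qed

lemma exists_upper_cover:
  assumes fin: "finite S" and po: "poset_on S le"
  shows "x \<in> S \<Longrightarrow> z \<in> S \<Longrightarrow> le x z \<Longrightarrow> x \<noteq> z \<Longrightarrow> \<exists>w\<in>S. covers S le x w \<and> le w z"
proof (induction "card {u\<in>S. le x u \<and> le u z \<and> u \<noteq> x}" arbitrary: z rule: less_induct)
  case (less z)
  show ?case
  proof (cases "covers S le x z")
    case True
    then show ?thesis using less.prems poset_on_refl[OF po] by blast
  next
    case False
    then obtain u where u: "u \<in> S" "le x u" "le u z" "u \<noteq> x" "u \<noteq> z"
      using less.prems unfolding covers_def by blast
    let ?below = "\<lambda>z. {v\<in>S. le x v \<and> le v z \<and> v \<noteq> x}"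
    have "?below u \<subseteq> ?below z"
      using poset_on_trans[OF po _ u(1) less.prems(2)] u(3) by blast
    moreover have "z \<in> ?below z"
      using less.prems poset_on_refl[OF po] by blast
    moreover have "z \<notin> ?below u"
      using poset_on_antisym[OF po u(1) less.prems(2) u(3)] u(5) by blast
    ultimately have "?below u \<subset> ?below z" by blast
    then have "card (?below u) < card (?below z)"
      using fin by (simp add: psubset_card_mono)
    then obtain w where w: "w \<in> S" "covers S le x w" "le w u"
      using less.hyps[OF _ less.prems(1) u(1,2)] u(4) by blast
    moreover have "le w z"
      using poset_on_trans[OF po w(1) u(1) less.prems(2) w(3) u(3)] .
    ultimately show ?thesis by blast
  qed
qed

lemma exists_lower_cover:
  assumes "finite S" "poset_on S le" "x \<in> S" "z \<in> S" "le x z" "x \<noteq> z"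
  shows "\<exists>w\<in>S. le x w \<and> covers S le w z"
  using exists_upper_cover[OF assms(1) poset_on_conversep[OF assms(2)], of z x] assms(3-6)
  unfolding covers_conversep conversep_iff by blast

lemma order_iso_sym:
  assumes "order_iso S le T le'"
  shows "order_iso T le' S le"
proof -
  obtain f where f: "bij_betw f S T" "\<forall>x\<in>S. \<forall>y\<in>S. le x y \<longleftrightarrow> le' (f x) (f y)"
    using assms unfolding order_iso_def by blast
  have "le' x y \<longleftrightarrow> le (inv_into S f x) (inv_into S f y)" if "x \<in> T" "y \<in> T" for x y
  proof -
    have "inv_into S f x \<in> S" "inv_into S f y \<in> S"
      using that bij_betw_inv_into[OF f(1)] bij_betw_apply by metis+
    moreover have "f (inv_into S f x) = x" "f (inv_into S f y) = y"
      using that f(1) bij_betw_inv_into_right by metis+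
    ultimately show ?thesis using f(2) by metis
  qed
  then show ?thesis
    using bij_betw_inv_into[OF f(1)] unfolding order_iso_def by blast
qed

lemma alternating_parity:
  fixes P :: "nat \<Rightarrow> bool"
  assumes alt: "\<And>i. i < m \<Longrightarrow> P ((i + 1) mod m) \<longleftrightarrow> \<not> P i" and m: "0 < m"
  shows alternating_parity_nth: "i < m \<Longrightarrow> P i \<longleftrightarrow> (P 0 \<longleftrightarrow> even i)"
    and alternating_parity_even: "even m"
proof -
  show parity: "P i \<longleftrightarrow> (P 0 \<longleftrightarrow> even i)" if "i < m" for i
    using that
  proof (induction i)
    case (Suc i)
    then show ?case using alt[of i] by simp
  qed simp
  have "P 0 \<longleftrightarrow> \<not> P (m - 1)" using alt[of "m - 1"] m by simp
  then show "even m" using parity[of "m - 1"] m by (cases m) auto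
qed

definition diamond :: "('a \<Rightarrow> 'a \<Rightarrow> bool) \<Rightarrow> 'a \<Rightarrow> 'a \<Rightarrow> 'a \<Rightarrow> 'a \<Rightarrow> bool" where
  "diamond le b x z a \<longleftrightarrow> le b x \<and> le x a \<and> le b z \<and> le z a \<and> \<not> le x z \<and> \<not> le z x"

lemma diamond_distinct:
  assumes po: "poset_on S le" and S: "x \<in> S" "z \<in> S" "a \<in> S" and "diamond le b x z a"
  shows "distinct [b, x, z, a]"
proof -
  have le: "le b x" "le x a" "le b z" "le z a" and nle: "\<not> le x z" "\<not> le z x"
    using assms(5) unfolding diamond_def by blast+
  have "b \<noteq> a" using poset_on_trans[OF po S(1,3,2)] le(2,3) nle(1) by blast
  moreover have "x \<noteq> z" using poset_on_refl[OF po S(1)] nle(1) by blast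
  ultimately show ?thesis using le nle by auto
qed

lemma diamond_le_iff:
  assumes po: "poset_on S le" and S: "b \<in> S" "x \<in> S" "z \<in> S" "a \<in> S"
    and dia: "diamond le b x z a" and uv: "u \<in> {b, x, z, a}" "v \<in> {b, x, z, a}"
  shows "le u v \<longleftrightarrow> u = v \<or> u = b \<or> v = a"
proof -
  have le: "le b x" "le x a" "le b z" "le z a" and nle: "\<not> le x z" "\<not> le z x"
    using dia unfolding diamond_def by blast+
  have dist: "distinct [b, x, z, a]" by (rule diamond_distinct[OF po S(2-4) dia])
  have "le b a" using poset_on_trans[OF po S(1,2,4) le(1,2)] .
  moreover have "le u u" using uv(1) S poset_on_refl[OF po] by blast
  moreover have "\<not> le x b" "\<not> le z b" "\<not> le a x" "\<not> le a z" "\<not> le a b"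
    using poset_on_antisym[OF po] S le \<open>le b a\<close> dist by auto
  ultimately show ?thesis using uv le nle by auto
qed

lemma diamond_hasse_cycle:
  assumes po: "poset_on S le" and S: "b \<in> S" "x \<in> S" "z \<in> S" "a \<in> S"
    and dia: "diamond le b x z a"
  shows "hasse_cycle {b, x, z, a} le [b, x, a, z]"
proof -
  let ?T = "{b, x, z, a}"
  have le_iff: "\<And>u v. u \<in> ?T \<Longrightarrow> v \<in> ?T \<Longrightarrow> le u v \<longleftrightarrow> u = v \<or> u = b \<or> v = a"
    by (rule diamond_le_iff[OF po S dia])
  have dist: "distinct [b, x, z, a]" by (rule diamond_distinct[OF po S(2-4) dia])
  have "covers ?T le b x" "covers ?T le x a" "covers ?T le z a" "covers ?T le b z"
    unfolding covers_def using le_iff dist by auto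
  then have "hasse_adj ?T le b x" "hasse_adj ?T le x a" "hasse_adj ?T le a z" "hasse_adj ?T le z b"
    unfolding hasse_adj_def by blast+
  moreover have "i = 0 \<or> i = 1 \<or> i = 2 \<or> i = 3" if "i < 4" for i :: nat
    using that by arith
  ultimately have "hasse_adj ?T le ([b, x, a, z] ! i) ([b, x, a, z] ! ((i + 1) mod 4))" if "i < 4" for i
    using that by fastforce
  then show ?thesis
    using dist unfolding hasse_cycle_def by auto
qed

definition non_maximal :: "'a set \<Rightarrow> ('a \<Rightarrow> 'a \<Rightarrow> bool) \<Rightarrow> 'a \<Rightarrow> bool" where
  "non_maximal S le v \<longleftrightarrow> (\<exists>w\<in>S. w \<noteq> v \<and> le v w)"

text \<open>crown_index lists the crown along its Hasse cycle s_1^+, s_1^-, s_2^+, s_2^-, ..., s_k^-.\<close>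
definition crown_index :: "bool \<times> nat \<Rightarrow> nat" where
  "crown_index p = (if fst p then 2 * snd p else 2 * snd p + 1)"

lemma bij_betw_crown_index: "bij_betw crown_index (W_set k) {..<2 * k}"
  by (rule bij_betw_byWitness[where f' = "\<lambda>l. (even l, l div 2)"])
    (auto simp: crown_index_def W_set_def)

lemma W_le_iff_crown_index:
  assumes "p \<in> W_set k" "q \<in> W_set k"
  shows "W_le k p q \<longleftrightarrow> crown_index p = crown_index q \<or> odd (crown_index p) \<and>
    (crown_index q = (crown_index p + 1) mod (2 * k) \<or> crown_index p = (crown_index q + 1) mod (2 * k))"
proof -
  obtain b i c j where pq: "p = (b, i)" "q = (c, j)" and ij: "i < k" "j < k"
    using assms unfolding W_set_def by auto
  have "Suc i mod k = (if Suc i = k then 0 else Suc i)"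
    "Suc (Suc (2 * i)) mod (2 * k) = (if Suc i = k then 0 else Suc (Suc (2 * i)))"
    "Suc (Suc (2 * j)) mod (2 * k) = (if Suc j = k then 0 else Suc (Suc (2 * j)))"
    "Suc (2 * i) mod (2 * k) = Suc (2 * i)" "Suc (2 * j) mod (2 * k) = Suc (2 * j)"
    using ij by auto
  note mods = this
  show ?thesis
    using ij unfolding pq W_le_def crown_index_def
    by (cases b; cases c; simp add: mods; presburger)
qed

locale proper_subsets_acyclic =
  fixes S :: "'a set" and le :: "'a \<Rightarrow> 'a \<Rightarrow> bool"
  assumes finite: "finite S" and poset: "poset_on S le"
    and acyclic: "\<And>T. T \<subset> S \<Longrightarrow> \<not> hasse_has_cycle T le"
begin

lemma cycle_spans:
  assumes cyc: "hasse_cycle S le xs"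
  shows "set xs = S"
proof (rule ccontr)
  assume "set xs \<noteq> S"
  moreover have sub: "set xs \<subseteq> S" using cyc unfolding hasse_cycle_def by blast
  moreover have "hasse_cycle (set xs) le xs" by (rule hasse_cycle_subset[OF cyc subset_refl sub])
  ultimately show False using acyclic[of "set xs"] hasse_has_cycle_iff by blast
qed

lemma hasse_adj_cycle_consecutive:
  assumes cyc: "hasse_cycle S le xs" and ij: "i < length xs" "j < length xs"
    and adj: "hasse_adj S le (xs ! i) (xs ! j)"
  shows "j = (i + 1) mod length xs \<or> i = (j + 1) mod length xs"
proof -
  let ?m = "length xs"
  have chordless: "j = i + 1 \<or> i = 0 \<and> j = ?m - 1"
    if ij: "i < j" "j < ?m" and adj: "hasse_adj S le (xs ! i) (xs ! j)" for i j
  proof (rule ccontr)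
    assume chord: "\<not> ?thesis"
    let ?n = "j - i + 1"
    let ?ys = "take ?n (drop i xs)"
    have n: "3 \<le> ?n" "i + ?n \<le> ?m" "?n < ?m" using ij chord by auto
    have sub: "set ?ys \<subseteq> S"
      using cyc set_take_subset set_drop_subset unfolding hasse_cycle_def by fastforce
    have "?ys ! 0 = xs ! i" "?ys ! (j - i) = xs ! j" using ij by simp_all
    moreover have "0 < length ?ys" "j - i < length ?ys" using n by simp_all
    ultimately have "xs ! j \<in> set ?ys" "xs ! i \<in> set ?ys" by (metis nth_mem)+
    moreover have "hasse_adj S le (xs ! j) (xs ! i)" using adj hasse_adj_commute by metis
    ultimately have "hasse_adj (set ?ys) le (xs ! j) (xs ! i)"
      using hasse_adj_subset[OF _ sub] by blast
    then have "hasse_adj (set ?ys) le (xs ! (i + ?n - 1)) (xs ! i)"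
      using ij by simp
    then have "hasse_cycle (set ?ys) le ?ys"
      using n sub by (intro hasse_cycle_segment[OF cyc]) simp_all
    moreover have "set ?ys \<subset> S"
    proof -
      have "distinct ?ys" "distinct xs" using cyc unfolding hasse_cycle_def by simp_all
      then have "card (set ?ys) < card (set xs)" using n by (simp add: distinct_card)
      then have "set ?ys \<noteq> S" using cycle_spans[OF cyc] by auto
      then show ?thesis using sub by blast
    qed
    ultimately show False using acyclic[of "set ?ys"] hasse_has_cycle_iff by blast
  qed
  have m: "?m - 1 + 1 = ?m" using ij by linarith
  have "i \<noteq> j" using adj hasse_adj_irrefl by metis
  then consider "i < j" | "j < i" by linarith
  then show ?thesis
  proof cases
    case 1
    then show ?thesis using chordless[OF 1 ij(2) adj] ij m by auto
  next
    case 2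
    have "hasse_adj S le (xs ! j) (xs ! i)" using adj hasse_adj_commute by metis
    then show ?thesis using chordless[OF 2 ij(1)] ij m by auto
  qed
qed

lemma hasse_adj_cycle_head:
  assumes cyc: "hasse_cycle S le (x # ys)" and adj: "hasse_adj S le x v"
  shows "v = hd ys \<or> v = last ys"
proof -
  have "v \<in> S" using adj unfolding hasse_adj_def covers_def by blast
  then obtain j where j: "j < length (x # ys)" "(x # ys) ! j = v"
    using cycle_spans[OF cyc] by (metis in_set_conv_nth)
  have len: "2 \<le> length ys" using cyc unfolding hasse_cycle_def by simp
  have "j = 1 mod length (x # ys) \<or> 0 = (j + 1) mod length (x # ys)"
    using hasse_adj_cycle_consecutive[OF cyc, of 0 j] adj j by simp
  then have "j = 1 \<or> j = length ys" using j(1) len by (auto simp: mod_Suc split: if_splits)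
  moreover have "ys \<noteq> []" using len by auto
  ultimately show ?thesis
    using j(2) by (auto simp: hd_conv_nth last_conv_nth nth_Cons')
qed

lemma cycle_neighbours_not_hasse_adj_Diff:
  assumes cyc: "hasse_cycle S le (x # ys)"
  shows "\<not> hasse_adj (S - {x}) le (last ys) (hd ys)"
proof
  assume adj: "hasse_adj (S - {x}) le (last ys) (hd ys)"
  have len: "3 \<le> length ys" using hasse_cycle_length_ge_4[OF poset cyc] by simp
  have x: "x \<in> S" and sub: "set ys \<subseteq> S - {x}"
    using cyc cycle_spans[OF cyc] unfolding hasse_cycle_def by auto
  have "ys \<noteq> []" using len by auto
  then have "(x # ys) ! (1 + length ys - 1) = last ys" "(x # ys) ! 1 = hd ys"
    by (simp_all add: hd_conv_nth last_conv_nth nth_Cons')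
  then have "hasse_cycle (S - {x}) le (take (length ys) (drop 1 (x # ys)))"
    using len sub adj by (intro hasse_cycle_segment[OF cyc]) simp_all
  then have "hasse_has_cycle (S - {x}) le" using hasse_has_cycle_iff by auto
  moreover have "S - {x} \<subset> S" using x by blast
  ultimately show False using acyclic by blast
qed

lemma height_le_1_if_no_diamond:
  assumes cyc: "hasse_cycle S le xs"
    and no_diamond: "\<And>b x z a. b \<in> S \<Longrightarrow> x \<in> S \<Longrightarrow> z \<in> S \<Longrightarrow> a \<in> S \<Longrightarrow> \<not> diamond le b x z a"
    and S: "y \<in> S" "x \<in> S" "w \<in> S" and le: "le y x" "le x w"
  shows "y = x \<or> x = w"
proof (rule ccontr)
  assume "\<not> (y = x \<or> x = w)"
  then obtain y' w' where y': "y' \<in> S" "covers S le y' x" and w': "w' \<in> S" "covers S le x w'"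
    using exists_lower_cover[OF finite poset S(1,2) le(1)]
      exists_upper_cover[OF finite poset S(2,3) le(2)] by blast
  have le': "le y' x" "le x w'" "y' \<noteq> x" "x \<noteq> w'" using y' w' unfolding covers_def by blast+
  have "y' \<noteq> w'" using poset_on_antisym[OF poset y'(1) S(2) le'(1)] le'(2,3) by blast
  obtain ys where cyc_x: "hasse_cycle S le (x # ys)"
    using hasse_cycle_rotate_to_head[OF cyc] cycle_spans[OF cyc] S(2) by blast
  have "hasse_adj S le x y'" "hasse_adj S le x w'"
    using y' w' unfolding hasse_adj_def by blast+
  then have "y' = hd ys \<or> y' = last ys" "w' = hd ys \<or> w' = last ys"
    using hasse_adj_cycle_head[OF cyc_x] by blast+
  then have "\<not> hasse_adj (S - {x}) le y' w'"
    using cycle_neighbours_not_hasse_adj_Diff[OF cyc_x] hasse_adj_commute \<open>y' \<noteq> w'\<close> by metis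
  moreover have "le y' w'" using poset_on_trans[OF poset y'(1) S(2) w'(1) le'(1,2)] .
  ultimately obtain z where z: "z \<in> S" "z \<noteq> x" "le y' z" "le z w'" "z \<noteq> y'" "z \<noteq> w'"
    using y'(1) w'(1) le' \<open>y' \<noteq> w'\<close> unfolding hasse_adj_def covers_def by blast
  have "\<not> le x z" using w' z unfolding covers_def by blast
  moreover have "\<not> le z x" using y' z unfolding covers_def by blast
  ultimately have "diamond le y' x z w'" using le' z unfolding diamond_def by blast
  then show False using no_diamond y'(1) S(2) z(1) w'(1) by blast
qed

lemma diamond_order_iso_V:
  assumes S: "b \<in> S" "x \<in> S" "z \<in> S" "a \<in> S" and dia: "diamond le b x z a"
  shows "order_iso S le V_set V_le"
proof -
  let ?vs = "[b, x, z, a]"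
  have "hasse_has_cycle {b, x, z, a} le"
    using diamond_hasse_cycle[OF poset S dia] hasse_has_cycle_iff by blast
  then have span: "set ?vs = S" using acyclic[of "{b, x, z, a}"] S by auto
  have dist: "distinct ?vs" by (rule diamond_distinct[OF poset S(2-4) dia])
  have V: "V_set = {..<length ?vs}" unfolding V_set_def by auto
  have "V_le p q \<longleftrightarrow> le (?vs ! p) (?vs ! q)" if pq: "p \<in> V_set" "q \<in> V_set" for p q
  proof -
    have lt: "p < length ?vs" "q < length ?vs" using pq V by auto
    then have "?vs ! p \<in> {b, x, z, a}" "?vs ! q \<in> {b, x, z, a}"
      using nth_mem[of _ ?vs] by simp_all
    then have "le (?vs ! p) (?vs ! q) \<longleftrightarrow> ?vs ! p = ?vs ! q \<or> ?vs ! p = ?vs ! 0 \<or> ?vs ! q = ?vs ! 3"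
      using diamond_le_iff[OF poset S dia] by simp
    also have "\<dots> \<longleftrightarrow> p = q \<or> p = 0 \<or> q = 3"
      using nth_eq_iff_index_eq[OF dist lt] nth_eq_iff_index_eq[OF dist lt(1), of 0]
        nth_eq_iff_index_eq[OF dist _ lt(2), of 3] by auto
    finally show ?thesis unfolding V_le_def by simp
  qed
  then have "order_iso V_set V_le S le"
    using bij_betw_nth[OF dist V span[symmetric]] unfolding order_iso_def by blast
  then show ?thesis by (rule order_iso_sym)
qed

context
  assumes height_le_1: "\<And>y x w. y \<in> S \<Longrightarrow> x \<in> S \<Longrightarrow> w \<in> S \<Longrightarrow> le y x \<Longrightarrow> le x w \<Longrightarrow> y = x \<or> x = w"
begin

lemma non_maximal_minimal:
  assumes "non_maximal S le v" "v \<in> S" "u \<in> S" "le u v"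
  shows "u = v"
  using assms height_le_1 unfolding non_maximal_def by blast

lemma covers_non_maximal:
  assumes "covers S le u v"
  shows "non_maximal S le u" "\<not> non_maximal S le v"
proof -
  show "non_maximal S le u" using assms unfolding covers_def non_maximal_def by auto
  show "\<not> non_maximal S le v" using assms non_maximal_minimal[of v u] unfolding covers_def by blast
qed

lemma cycle_non_maximal_alternates:
  assumes cyc: "hasse_cycle S le xs" and i: "i < length xs"
  shows "non_maximal S le (xs ! ((i + 1) mod length xs)) \<longleftrightarrow> \<not> non_maximal S le (xs ! i)"
  using hasse_cycle_adj[OF cyc i] covers_non_maximal unfolding hasse_adj_def by blast

lemma le_cycle_iff:
  assumes cyc: "hasse_cycle S le xs" and ij: "i < length xs" "j < length xs"
  shows "le (xs ! i) (xs ! j) \<longleftrightarrow> i = j \<or> non_maximal S le (xs ! i) \<and>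
    (j = (i + 1) mod length xs \<or> i = (j + 1) mod length xs)"
proof -
  have S: "xs ! i \<in> S" "xs ! j \<in> S" using cyc ij nth_mem unfolding hasse_cycle_def by blast+
  have dist: "xs ! i = xs ! j \<longleftrightarrow> i = j"
    using cyc ij nth_eq_iff_index_eq unfolding hasse_cycle_def by blast
  show ?thesis
  proof
    assume le: "le (xs ! i) (xs ! j)"
    show "i = j \<or> non_maximal S le (xs ! i) \<and> (j = (i + 1) mod length xs \<or> i = (j + 1) mod length xs)"
    proof (cases "i = j")
      case False
      then have "covers S le (xs ! i) (xs ! j)"
        using S le dist height_le_1 unfolding covers_def by blast
      then show ?thesis
        using hasse_adj_cycle_consecutive[OF cyc ij] covers_non_maximal(1)
        unfolding hasse_adj_def by blast
    qed simp
  next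
    assume "i = j \<or> non_maximal S le (xs ! i) \<and> (j = (i + 1) mod length xs \<or> i = (j + 1) mod length xs)"
    then consider "i = j" | "non_maximal S le (xs ! i)" "hasse_adj S le (xs ! i) (xs ! j)"
      using hasse_cycle_adj[OF cyc] ij hasse_adj_commute by metis
    then show "le (xs ! i) (xs ! j)"
    proof cases
      case 1
      then show ?thesis using poset_on_refl[OF poset S(1)] by simp
    next
      case 2
      then show ?thesis
        using covers_non_maximal(2) unfolding hasse_adj_def covers_def by blast
    qed
  qed
qed

lemma crown_order_iso:
  assumes cyc: "hasse_cycle S le xs"
  shows "order_iso S le (W_set (length xs div 2)) (W_le (length xs div 2))"
proof -
  let ?m = "length xs" and ?k = "length xs div 2"
  have m: "0 < ?m" using hasse_cycle_length_ge_4[OF poset cyc] by linarith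
  have "even ?m"
    using alternating_parity_even[of ?m "\<lambda>i. non_maximal S le (xs ! i)"]
      cycle_non_maximal_alternates[OF cyc] m by blast
  then have mk: "?m = 2 * ?k" by simp
  obtain ys where ys: "hasse_cycle S le ys" "length ys = ?m" "\<not> non_maximal S le (ys ! 0)"
  proof (cases "non_maximal S le (xs ! 0)")
    case True
    have "rotate 1 xs ! 0 = xs ! ((0 + 1) mod ?m)" using nth_rotate[OF m, of 1] by simp
    show ?thesis
    proof (rule that)
      show "hasse_cycle S le (rotate 1 xs)" by (rule hasse_cycle_rotate[OF cyc])
      show "\<not> non_maximal S le (rotate 1 xs ! 0)"
        using \<open>rotate 1 xs ! 0 = xs ! ((0 + 1) mod ?m)\<close> True
          cycle_non_maximal_alternates[OF cyc m] by simp
    qed simp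
  next
    case False
    then show ?thesis using that cyc by blast
  qed
  have top_bottom: "non_maximal S le (ys ! i) \<longleftrightarrow> odd i" if "i < ?m" for i
  proof -
    have "\<And>i. i < ?m \<Longrightarrow> non_maximal S le (ys ! ((i + 1) mod ?m)) \<longleftrightarrow> \<not> non_maximal S le (ys ! i)"
      using cycle_non_maximal_alternates[OF ys(1)] ys(2) by simp
    from alternating_parity_nth[where P = "\<lambda>i. non_maximal S le (ys ! i)", OF this m that] show ?thesis using ys(3) by simp
  qed
  have "distinct ys" using ys(1) unfolding hasse_cycle_def by blast
  moreover have "{..<2 * ?k} = {..<length ys}" using ys(2) mk by simp
  ultimately have "bij_betw ((!) ys) {..<2 * ?k} S"
    using cycle_spans[OF ys(1)] by (intro bij_betw_nth) simp_all
  then have bij: "bij_betw ((!) ys \<circ> crown_index) (W_set ?k) S"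
    by (rule bij_betw_trans[OF bij_betw_crown_index])
  have "W_le ?k p q \<longleftrightarrow> le (ys ! crown_index p) (ys ! crown_index q)"
    if pq: "p \<in> W_set ?k" "q \<in> W_set ?k" for p q
  proof -
    have "crown_index p < ?m" "crown_index q < ?m"
      using pq bij_betw_apply[OF bij_betw_crown_index] mk by (metis lessThan_iff)+
    then show ?thesis
      using le_cycle_iff[OF ys(1)] top_bottom W_le_iff_crown_index[OF pq] ys(2) mk by simp
  qed
  then have "order_iso (W_set ?k) (W_le ?k) S le"
    using bij unfolding order_iso_def by auto
  then show ?thesis by (rule order_iso_sym)
qed

end

end

theorem lemma8:
  fixes S :: "'a set" and le :: "'a \<Rightarrow> 'a \<Rightarrow> bool"
  assumes "finite S"
    and "poset_on S le"
    and "hasse_has_cycle S le"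
    and "\<And>S'. S' \<subset> S \<Longrightarrow> \<not> hasse_has_cycle S' le"
  shows "order_iso S le V_set V_le \<or> (\<exists>k\<ge>2. order_iso S le (W_set k) (W_le k))"
proof -
  interpret proper_subsets_acyclic S le
    using assms(1,2,4) by unfold_locales
  obtain xs where cyc: "hasse_cycle S le xs" using assms(3) hasse_has_cycle_iff by blast
  show ?thesis
  proof (cases "\<exists>b\<in>S. \<exists>x\<in>S. \<exists>z\<in>S. \<exists>a\<in>S. diamond le b x z a")
    case True
    then show ?thesis using diamond_order_iso_V by blast
  next
    case False
    then have "\<And>y x w. y \<in> S \<Longrightarrow> x \<in> S \<Longrightarrow> w \<in> S \<Longrightarrow> le y x \<Longrightarrow> le x w \<Longrightarrow> y = x \<or> x = w"
      using height_le_1_if_no_diamond[OF cyc] by blast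
    then have "order_iso S le (W_set (length xs div 2)) (W_le (length xs div 2))"
      using crown_order_iso cyc by blast
    moreover have "2 \<le> length xs div 2" using hasse_cycle_length_ge_4[OF assms(2) cyc] by simp
    ultimately show ?thesis by blast
  qed
qed

end
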